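(* Let $P=(Q,I,M,\Delta)$ be a broadcast protocol, let $F\subseteq Q$, and let $S$ be the set of states returned by the saturation algorithm on input $P$. If $F\cap S\neq\emptyset$, then there exists a reconfigurable execution $\rho$ covering $F$ such that $\rho$ has at most $2|Q|$ nodes and length at most $2|Q|^2$.
   Context: A broadcast protocol is a tuple $P=(Q,I,M,\Delta)$ where $Q$ is a finite set of states, $I\subseteq Q$ is the set of initial states, $M$ is a finite message alphabet and $\Delta\subseteq Q\times\{!!m,\ ??m \mid m\in M\}\times Q$ is the transition relation ($!!m$ = broadcast of $m$, $??m$ = reception of $m$). Protocols are assumed complete for receptions: for every $q\in Q$ and $m\in M$ there is $q'$ with $(q,??m,q')\in\Delta$. A configuration is a finite undirected graph $\gamma=(V,E,L)$ with $E\subseteq V\times V$ symmetric and irreflexive and $L:V\to Q$; $L(\gamma)$ denotes the set $L(V)$ of labels occurring in $\gamma$; $\gamma$ is initial if $L(V)\subseteq I$. For $v\in V$, its neighbours are the $v'$ with $(v,v')\in E$. A reconfigurable step goes from $\gamma=(V,E,L)$ to $\gamma'=(V,E',L')$ (same node set, arbitrary new edge set $E'$) if there exist a node $v$ and a message $m$ with $(L(v),!!m,L'(v))\in\Delta$ and, for every $v'\neq v$: if $v'$ is a neighbour of $v$ in $E$ then $(L(v'),??m,L'(v'))\in\Delta$, otherwise $L'(v')=L(v')$; $v$ is then said to broadcast in this step. A reconfigurable execution is a sequence $\gamma_0,\dots,\gamma_r$ of configurations over a fixed node set with $\gamma_0$ initial and each $\gamma_i\to\gamma_{i+1}$ a reconfigurable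 step; its number of nodes is $|V|$, its length is $r$, and it covers $F$ if $L(\gamma_r)\cap F\neq\emptyset$. The saturation algorithm on input $P$: start with $S:=I$, $c:=|I|$; repeat: if there is $(q_1,!!m,q_2)\in\Delta$ with $q_1\in S$, $q_2\notin S$, add $q_2$ to $S$ and set $c:=c+1$; else if there are $(q_1,!!m,q_2)\in\Delta$ and $(q_1',??m,q_2')\in\Delta$ with $q_1,q_2,q_1'\in S$ and $q_2'\notin S$, add $q_2'$ to $S$ and set $c:=c+2$; else stop and return $S$ (choices among candidates are arbitrary). *)

theory Defs
  imports Main
begin

datatype 'm action = Bcast 'm | Recv 'm

fun msg_of :: "'m action \<Rightarrow> 'm" where
  "msg_of (Bcast m) = m" | "msg_of (Recv m) = m"

definition broadcast_protocol ::
  "'q set \<Rightarrow> 'q set \<Rightarrow> 'm set \<Rightarrow> ('q \<times> 'm action \<times> 'q) set \<Rightarrow> bool" where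
  "broadcast_protocol Q I M \<Delta> \<longleftrightarrow>
     finite Q \<and> I \<subseteq> Q \<and> finite M \<and>
     (\<forall>(q, a, q') \<in> \<Delta>. q \<in> Q \<and> q' \<in> Q \<and> msg_of a \<in> M) \<and>
     (\<forall>q\<in>Q. \<forall>m\<in>M. \<exists>q'. (q, Recv m, q') \<in> \<Delta>)"

inductive sat_step :: "('q \<times> 'm action \<times> 'q) set \<Rightarrow> ('q set \<times> nat) \<Rightarrow> ('q set \<times> nat) \<Rightarrow> bool"
  for \<Delta> where
  bcast: "\<lbrakk>(q1, Bcast m, q2) \<in> \<Delta>; q1 \<in> S; q2 \<notin> S\<rbrakk>
          \<Longrightarrow> sat_step \<Delta> (S, c) (insert q2 S, c + 1)"
| recv: "\<lbrakk>\<not> (\<exists>q1 m q2. (q1, Bcast m, q2) \<in> \<Delta> \<and> q1 \<in> S \<and> q2 \<notin> S);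
          (q1, Bcast m, q2) \<in> \<Delta>; (q1', Recv m, q2') \<in> \<Delta>;
          q1 \<in> S; q2 \<in> S; q1' \<in> S; q2' \<notin> S\<rbrakk>
          \<Longrightarrow> sat_step \<Delta> (S, c) (insert q2' S, c + 2)"

definition saturation_result :: "'q set \<Rightarrow> ('q \<times> 'm action \<times> 'q) set \<Rightarrow> 'q set \<Rightarrow> bool" where
  "saturation_result I \<Delta> S \<longleftrightarrow>
     (\<exists>c. (sat_step \<Delta>)\<^sup>*\<^sup>* (I, card I) (S, c) \<and> (\<nexists>st. sat_step \<Delta> (S, c) st))"

type_synonym 'q config = "(nat \<times> nat) set \<times> (nat \<Rightarrow> 'q)"

definition config_wf :: "nat set \<Rightarrow> 'q config \<Rightarrow> bool" where
  "config_wf V \<gamma> \<longleftrightarrow> (let E = fst \<gamma> in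
      E \<subseteq> V \<times> V \<and> (\<forall>v v'. (v, v') \<in> E \<longrightarrow> (v', v) \<in> E) \<and> (\<forall>v. (v, v) \<notin> E))"

definition labels :: "nat set \<Rightarrow> 'q config \<Rightarrow> 'q set" where
  "labels V \<gamma> = snd \<gamma> ` V"

definition initial_config :: "'q set \<Rightarrow> nat set \<Rightarrow> 'q config \<Rightarrow> bool" where
  "initial_config I V \<gamma> \<longleftrightarrow> labels V \<gamma> \<subseteq> I"

definition reconf_step ::
  "('q \<times> 'm action \<times> 'q) set \<Rightarrow> nat set \<Rightarrow> 'q config \<Rightarrow> 'q config \<Rightarrow> bool" where
  "reconf_step \<Delta> V \<gamma> \<gamma>' \<longleftrightarrow>
     (let E = fst \<gamma>; L = snd \<gamma>; L' = snd \<gamma>' in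
       \<exists>v\<in>V. \<exists>m. (L v, Bcast m, L' v) \<in> \<Delta> \<and>
         (\<forall>v'\<in>V. v' \<noteq> v \<longrightarrow>
            ((v, v') \<in> E \<longrightarrow> (L v', Recv m, L' v') \<in> \<Delta>) \<and>
            ((v, v') \<notin> E \<longrightarrow> L' v' = L v')))"

text \<open>A reconfigurable execution gamma_0, ..., gamma_r as a nonempty list over the
  fixed finite node set V; its length is r = length - 1.\<close>
definition reconf_execution ::
  "'q set \<Rightarrow> ('q \<times> 'm action \<times> 'q) set \<Rightarrow> nat set \<Rightarrow> 'q config list \<Rightarrow> bool" where
  "reconf_execution I \<Delta> V \<rho> \<longleftrightarrow>
     finite V \<and> \<rho> \<noteq> [] \<and> (\<forall>\<gamma>\<in>set \<rho>. config_wf V \<gamma>) \<and>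
     initial_config I V (\<rho> ! 0) \<and>
     (\<forall>i. Suc i < length \<rho> \<longrightarrow> reconf_step \<Delta> V (\<rho> ! i) (\<rho> ! Suc i))"

definition exec_length :: "'q config list \<Rightarrow> nat" where
  "exec_length \<rho> = length \<rho> - 1"

definition covers :: "nat set \<Rightarrow> 'q config list \<Rightarrow> 'q set \<Rightarrow> bool" where
  "covers V \<rho> F \<longleftrightarrow> labels V (last \<rho>) \<inter> F \<noteq> {}"

end

theory Submission
  imports Defs
begin

text \<open>
  Induction along the run of the saturation algorithm, for a stronger statement: every
  labelling of a finite set V of nodes by states of S is reached, over some node set
  W \<supseteq> V, from an initial configuration. If S grows by q2 through a broadcast q1 \<rightarrow> q2,
  first reach the labelling in which the nodes destined for q2 are in q1, then let them
  broadcast one after the other without neighbours. If S grows by q2' through a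
  reception of m, add one helper node, first reach the labelling in which the helper is
  in the sender state q1 and the nodes destined for q2' are in q1', then let the helper
  broadcast m once to exactly those nodes. Every saturation step thus costs at most |W|
  steps and at most one node, and the counter c of the algorithm bounds the number of
  helpers.
\<close>

definition broadcast_step ::
  "('q \<times> 'm action \<times> 'q) set \<Rightarrow> nat set \<Rightarrow> (nat \<Rightarrow> 'q) \<Rightarrow> (nat \<Rightarrow> 'q) \<Rightarrow> bool" where
  "broadcast_step \<Delta> W L L' \<longleftrightarrow> (\<exists>E. config_wf W (E, L) \<and> reconf_step \<Delta> W (E, L) (E, L'))"

lemma reconf_step_target_edges:
  "reconf_step \<Delta> W \<gamma> (E', L') \<longleftrightarrow> reconf_step \<Delta> W \<gamma> (E'', L')"
  by (simp add: reconf_step_def)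

lemma broadcast_steps_execution:
  assumes "(broadcast_step \<Delta> W ^^ n) L0 L1" "finite W" "L0 ` W \<subseteq> I"
  shows "\<exists>\<rho>. reconf_execution I \<Delta> W \<rho> \<and> snd (last \<rho>) = L1 \<and> exec_length \<rho> = n"
proof -
  obtain Ls where Ls: "Ls 0 = L0" "Ls n = L1" "\<forall>i<n. broadcast_step \<Delta> W (Ls i) (Ls (Suc i))"
    using assms(1) by (auto simp: relpowp_fun_conv)
  have "\<exists>E. config_wf W (E, Ls i) \<and> (i < n \<longrightarrow> reconf_step \<Delta> W (E, Ls i) (E, Ls (Suc i)))" for i
  proof (cases "i < n")
    case True
    then show ?thesis using Ls(3) unfolding broadcast_step_def by blast
  next
    case False
    have "config_wf W ({}, Ls i)" by (simp add: config_wf_def)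
    with False show ?thesis by blast
  qed
  then obtain Es where Es: "\<And>i. config_wf W (Es i, Ls i)"
    "\<And>i. i < n \<Longrightarrow> reconf_step \<Delta> W (Es i, Ls i) (Es i, Ls (Suc i))"
    by metis
  define \<rho> where "\<rho> = map (\<lambda>i. (Es i, Ls i)) [0..<Suc n]"
  have "reconf_execution I \<Delta> W \<rho>"
    unfolding reconf_execution_def
  proof (intro conjI allI impI ballI)
    show "finite W" "\<rho> \<noteq> []" using assms(2) by (simp_all add: \<rho>_def)
    show "config_wf W \<gamma>" if "\<gamma> \<in> set \<rho>" for \<gamma>
      using that Es(1) by (auto simp: \<rho>_def)
    show "initial_config I W (\<rho> ! 0)"
      using assms(3) Ls(1) by (simp add: \<rho>_def initial_config_def labels_def del: upt_Suc)
    show "reconf_step \<Delta> W (\<rho> ! i) (\<rho> ! Suc i)" if "Suc i < length \<rho>" for i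
      using that Es(2)[of i] reconf_step_target_edges
      by (simp add: \<rho>_def del: upt_Suc) blast
  qed
  moreover have "snd (last \<rho>) = L1" "exec_length \<rho> = n"
    using Ls(2) by (simp_all add: \<rho>_def last_map exec_length_def del: upt_Suc)
  ultimately show ?thesis by blast
qed

lemma isolated_broadcasts:
  assumes "finite X" "X \<subseteq> W" "(q1, Bcast m, q2) \<in> \<Delta>" "\<forall>v\<in>X. L v = q1"
  shows "(broadcast_step \<Delta> W ^^ card X) L (\<lambda>v. if v \<in> X then q2 else L v)"
  using assms
proof (induction X rule: finite_induct)
  case empty
  then show ?case by simp
next
  case (insert x X)
  have "broadcast_step \<Delta> W (\<lambda>v. if v \<in> X then q2 else L v) (\<lambda>v. if v \<in> insert x X then q2 else L v)"
    unfolding broadcast_step_def reconf_step_def config_wf_def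
    using insert by (intro exI[of _ "{}"]) auto
  with insert show ?case by (auto intro: relpowp_Suc_I)
qed

lemma star_broadcast:
  assumes "h \<in> W" "X \<subseteq> W" "h \<notin> X" "(q1, Bcast m, q2) \<in> \<Delta>" "(q1', Recv m, q2') \<in> \<Delta>"
    "L h = q1" "\<forall>v\<in>X. L v = q1'"
  shows "broadcast_step \<Delta> W L (\<lambda>v. if v \<in> X then q2' else if v = h then q2 else L v)"
proof -
  let ?E = "{h} \<times> X \<union> X \<times> {h}"
  have "config_wf W (?E, L)"
    using assms(1-3) by (auto simp: config_wf_def)
  moreover have "reconf_step \<Delta> W (?E, L) (?E, \<lambda>v. if v \<in> X then q2' else if v = h then q2 else L v)"
    unfolding reconf_step_def Let_def using assms by (intro bexI[of _ h]) auto
  ultimately show ?thesis unfolding broadcast_step_def by blast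
qed

definition realizable ::
  "'q set \<Rightarrow> ('q \<times> 'm action \<times> 'q) set \<Rightarrow> nat set \<Rightarrow> (nat \<Rightarrow> 'q) \<Rightarrow> nat \<Rightarrow> nat \<Rightarrow> bool" where
  "realizable I \<Delta> V t k s \<longleftrightarrow>
     (\<exists>W L0 L1 n. finite W \<and> V \<subseteq> W \<and> card W \<le> card V + k \<and> L0 ` W \<subseteq> I \<and>
        (broadcast_step \<Delta> W ^^ n) L0 L1 \<and> n \<le> s * card W \<and> (\<forall>v\<in>V. L1 v = t v))"

lemma realizable_mono:
  assumes "realizable I \<Delta> V t k s" "k \<le> k'" "s \<le> s'"
  shows "realizable I \<Delta> V t k' s'"
proof -
  obtain W L0 L1 n where W: "finite W" "V \<subseteq> W" "card W \<le> card V + k" "L0 ` W \<subseteq> I"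
    and run: "(broadcast_step \<Delta> W ^^ n) L0 L1" and n: "n \<le> s * card W"
    and L1: "\<forall>v\<in>V. L1 v = t v"
    using assms(1) unfolding realizable_def by blast
  have "card W \<le> card V + k'" using W(3) assms(2) by linarith
  moreover have "n \<le> s' * card W" using n mult_le_mono1[OF assms(3)] by (rule le_trans)
  ultimately show ?thesis unfolding realizable_def using W run L1 by blast
qed

lemma realizable_broadcast:
  assumes "(q1, Bcast m, q2) \<in> \<Delta>" "finite V"
    and "realizable I \<Delta> V (\<lambda>v. if t v = q2 then q1 else t v) k s"
  shows "realizable I \<Delta> V t k (Suc s)"
proof -
  obtain W L0 L1 n where W: "finite W" "V \<subseteq> W" "card W \<le> card V + k" "L0 ` W \<subseteq> I"
    and run: "(broadcast_step \<Delta> W ^^ n) L0 L1" and n: "n \<le> s * card W"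
    and L1: "\<forall>v\<in>V. L1 v = (if t v = q2 then q1 else t v)"
    using assms(3) unfolding realizable_def by blast
  define X where "X = {v \<in> V. t v = q2}"
  have X: "finite X" "X \<subseteq> W"
    using assms(2) W(2) by (auto simp: X_def)
  have "(broadcast_step \<Delta> W ^^ (n + card X)) L0 (\<lambda>v. if v \<in> X then q2 else L1 v)"
    unfolding relpowp_add using run isolated_broadcasts[OF X assms(1)] L1 by (auto simp: X_def)
  moreover have "n + card X \<le> Suc s * card W"
    using n card_mono[OF W(1) X(2)] by simp
  moreover have "\<forall>v\<in>V. (if v \<in> X then q2 else L1 v) = t v"
    using L1 by (auto simp: X_def)
  ultimately show ?thesis
    unfolding realizable_def using W by blast
qed

lemma realizable_reception:
  assumes "(q1, Bcast m, q2) \<in> \<Delta>" "(q1', Recv m, q2') \<in> \<Delta>" "finite V" "h \<notin> V"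
    and "realizable I \<Delta> (insert h V) (\<lambda>v. if v = h then q1 else if t v = q2' then q1' else t v) k s"
  shows "realizable I \<Delta> V t (Suc k) (Suc s)"
proof -
  obtain W L0 L1 n where W: "finite W" "insert h V \<subseteq> W" "card W \<le> card (insert h V) + k"
      "L0 ` W \<subseteq> I"
    and run: "(broadcast_step \<Delta> W ^^ n) L0 L1" and n: "n \<le> s * card W"
    and L1: "\<forall>v\<in>insert h V. L1 v = (if v = h then q1 else if t v = q2' then q1' else t v)"
    using assms(5) unfolding realizable_def by blast
  define X where "X = {v \<in> V. t v = q2'}"
  have X: "h \<in> W" "X \<subseteq> W" "h \<notin> X"
    using W(2) assms(4) by (auto simp: X_def)
  have "broadcast_step \<Delta> W L1 (\<lambda>v. if v \<in> X then q2' else if v = h then q2 else L1 v)"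
    by (rule star_broadcast[OF X assms(1,2)]) (use L1 assms(4) in \<open>auto simp: X_def\<close>)
  then have "(broadcast_step \<Delta> W ^^ Suc n) L0 (\<lambda>v. if v \<in> X then q2' else if v = h then q2 else L1 v)"
    by (rule relpowp_Suc_I[OF run])
  moreover have "card W > 0"
    using W(1) X(1) card_gt_0_iff by blast
  then have "Suc n \<le> Suc s * card W"
    using n by simp
  moreover have "card (insert h V) = Suc (card V)"
    using assms(3,4) by simp
  then have "card W \<le> card V + Suc k"
    using W(3) by linarith
  moreover have "\<forall>v\<in>V. (if v \<in> X then q2' else if v = h then q2 else L1 v) = t v"
    using L1 assms(4) by (auto simp: X_def)
  ultimately show ?thesis
    unfolding realizable_def using W by blast
qed

lemma saturation_run_states:
  assumes "(sat_step \<Delta>)\<^sup>*\<^sup>* (I, c0) (S, c)"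
  shows "I \<subseteq> S \<and> S \<subseteq> I \<union> {q'. \<exists>q a. (q, a, q') \<in> \<Delta>}"
  using assms
proof (induction rule: rtranclp_induct2)
  case refl
  then show ?case by simp
next
  case (step S c S' c')
  from step(2) show ?case
    by cases (use step(3) in blast)+
qed

lemma saturation_run_card:
  assumes "(sat_step \<Delta>)\<^sup>*\<^sup>* (I, card I) (S, c)" "finite I"
  shows "finite S \<and> card S \<le> c \<and> c + card I \<le> 2 * card S"
  using assms(1)
proof (induction rule: rtranclp_induct2)
  case refl
  then show ?case using assms(2) by simp
next
  case (step S c S' c')
  from step(2) show ?case
    by cases (use step(3) in auto)
qed

lemma saturation_run_realizable:
  assumes "(sat_step \<Delta>)\<^sup>*\<^sup>* (I, card I) (S, c)" "finite I" "finite V" "t ` V \<subseteq> S"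
  shows "realizable I \<Delta> V t (c - card I) (card S - card I)"
  using assms(1,3,4)
proof (induction arbitrary: V t rule: rtranclp_induct2)
  case refl
  then show ?case
    unfolding realizable_def by (intro exI[of _ V] exI[of _ t] exI[of _ 0]) auto
next
  case (step S c S' c')
  have S: "finite S" "card S \<le> c"
    using saturation_run_card[OF step(1) assms(2)] by auto
  moreover have "card I \<le> card S"
    using saturation_run_states[OF step(1)] S(1) card_mono by blast
  ultimately have grow: "Suc (card S - card I) \<le> card (insert q S) - card I" if "q \<notin> S" for q
    using that by simp
  from step(2) show ?case
  proof cases
    case (bcast q1 m q2)
    have "realizable I \<Delta> V (\<lambda>v. if t v = q2 then q1 else t v) (c - card I) (card S - card I)"
      by (rule step.IH) (use step.prems bcast in auto)
    then have "realizable I \<Delta> V t (c - card I) (Suc (card S - card I))"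
      by (rule realizable_broadcast[OF bcast(3) step.prems(1)])
    then show ?thesis
      by (rule realizable_mono) (use bcast grow in auto)
  next
    case (recv q1 m q2 q1' q2')
    obtain h :: nat where h: "h \<notin> V"
      using ex_new_if_finite[OF infinite_UNIV_nat step.prems(1)] by blast
    have "realizable I \<Delta> (insert h V) (\<lambda>v. if v = h then q1 else if t v = q2' then q1' else t v)
        (c - card I) (card S - card I)"
      by (rule step.IH) (use step.prems recv in auto)
    then have "realizable I \<Delta> V t (Suc (c - card I)) (Suc (card S - card I))"
      by (rule realizable_reception[OF recv(4,5) step.prems(1) h])
    then show ?thesis
      by (rule realizable_mono) (use recv grow \<open>card I \<le> card S\<close> S(2) in auto)
  qed
qed

lemma saturation_state_coverable:
  assumes "(sat_step \<Delta>)\<^sup>*\<^sup>* (I, card I) (S, c)" "finite I" "q \<in> S"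
  shows "\<exists>W \<rho>. reconf_execution I \<Delta> W \<rho> \<and> q \<in> labels W (last \<rho>) \<and>
           card W \<le> Suc (c - card I) \<and> exec_length \<rho> \<le> (card S - card I) * card W"
proof -
  have "realizable I \<Delta> {0} (\<lambda>_. q) (c - card I) (card S - card I)"
    using saturation_run_realizable[OF assms(1,2)] assms(3) by simp
  then obtain W L0 L1 n where W: "finite W" "0 \<in> W" "card W \<le> Suc (c - card I)" "L0 ` W \<subseteq> I"
    and steps: "(broadcast_step \<Delta> W ^^ n) L0 L1" and n: "n \<le> (card S - card I) * card W"
    and L1: "L1 0 = q"
    unfolding realizable_def by auto
  obtain \<rho> where \<rho>: "reconf_execution I \<Delta> W \<rho>" "snd (last \<rho>) = L1" "exec_length \<rho> = n"
    using broadcast_steps_execution[OF steps W(1,4)] by blast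
  have "q \<in> labels W (last \<rho>)"
    using \<rho>(2) W(2) L1 unfolding labels_def by blast
  with \<rho> W(3) n show ?thesis by auto
qed

theorem theorem3p2:
  fixes Q I :: "'q set" and M :: "'m set" and \<Delta> :: "('q \<times> 'm action \<times> 'q) set"
    and F S :: "'q set"
  assumes "broadcast_protocol Q I M \<Delta>"
    and "F \<subseteq> Q"
    and "saturation_result I \<Delta> S"
    and "F \<inter> S \<noteq> {}"
  shows "\<exists>V \<rho>. reconf_execution I \<Delta> V \<rho> \<and> covers V \<rho> F \<and>
           card V \<le> 2 * card Q \<and> exec_length \<rho> \<le> 2 * (card Q)^2"
proof -
  have Q: "finite Q" "I \<subseteq> Q" "{q'. \<exists>q a. (q, a, q') \<in> \<Delta>} \<subseteq> Q"
    using assms(1) unfolding broadcast_protocol_def by auto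
  obtain c where run: "(sat_step \<Delta>)\<^sup>*\<^sup>* (I, card I) (S, c)"
    using assms(3) unfolding saturation_result_def by blast
  have I: "finite I" using Q finite_subset by blast
  have "S \<subseteq> Q"
    using saturation_run_states[OF run] Q(2,3) by blast
  then have S: "card S \<le> card Q" "c + card I \<le> 2 * card S"
    using card_mono[OF Q(1)] saturation_run_card[OF run I] by auto
  obtain f where f: "f \<in> F" "f \<in> S" using assms(4) by blast
  then obtain W \<rho> where \<rho>: "reconf_execution I \<Delta> W \<rho>" "f \<in> labels W (last \<rho>)"
    and W: "card W \<le> Suc (c - card I)" and len: "exec_length \<rho> \<le> (card S - card I) * card W"
    using saturation_state_coverable[OF run I] by blast
  have "covers W \<rho> F" using \<rho>(2) f(1) by (auto simp: covers_def)
  moreover have "I \<noteq> {}"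
    using \<rho> unfolding reconf_execution_def initial_config_def labels_def by auto
  then have "card I > 0" using I by (simp add: card_gt_0_iff)
  then have "card W \<le> 2 * card Q" using W S by linarith
  moreover have "(card S - card I) * card W \<le> card Q * (2 * card Q)"
    using S(1) \<open>card W \<le> 2 * card Q\<close> by (intro mult_le_mono) linarith+
  then have "exec_length \<rho> \<le> 2 * (card Q)^2"
    using len unfolding power2_eq_square by linarith
  ultimately show ?thesis using \<rho>(1) by blast
qed

end
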